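(* Let $r$ be either an integer with $r\ge 2$ or $r=\infty$. Then, with probability one, $$\lim_{n\to\infty}\|\hat p_n-p_0\|_r=0 .$$
   Context: For a real sequence $p=(p(k))_{k\in\mathbb N}$ (with $\mathbb N=\{0,1,2,\dots\}$) write $\|p\|_r=(\sum_{k\ge0}|p(k)|^r)^{1/r}$ for integers $r\ge1$ and $\|p\|_\infty=\sup_k|p(k)|$. For $k\ge1$ let $\Delta p(k)=p(k+1)-2p(k)+p(k-1)$. A sequence $p$ is convex if $\Delta p(k)\ge0$ for all integers $k\ge1$; let $\mathcal C$ be the set of convex sequences with $\|p\|_2<\infty$. Let $p_0$ be a convex probability mass function (pmf) on $\mathbb N$ whose support is either $\mathbb N$ or $\{0,1,\dots,S\}$ for some integer $S\ge1$. Let $X_1,X_2,\dots$ be i.i.d. with pmf $p_0$, let $p_n(j)=\frac1n\sum_{i=1}^n\mathbb 1\{X_i=j\}$ be the empirical pmf, and let the least squares estimator (LSE) $\hat p_n$ be the unique minimizer over $\mathcal C$ of $\Phi_n(p)=\frac12\sum_{j\in\mathbb N}(p_n(j)-p(j))^2$. *)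

theory Defs
  imports "HOL-Probability.Probability"
begin

definition seq_norm :: "enat \<Rightarrow> (nat \<Rightarrow> real) \<Rightarrow> real" where
  "seq_norm r p = (case r of
      enat m \<Rightarrow> (\<Sum>k. \<bar>p k\<bar> ^ m) powr (1 / real m)
    | \<infinity> \<Rightarrow> (SUP k. \<bar>p k\<bar>))"

definition Delta2 :: "(nat \<Rightarrow> real) \<Rightarrow> nat \<Rightarrow> real" where
  "Delta2 p k = p (k + 1) - 2 * p k + p (k - 1)"

definition convex_seq :: "(nat \<Rightarrow> real) \<Rightarrow> bool" where
  "convex_seq p \<longleftrightarrow> (\<forall>k\<ge>1. Delta2 p k \<ge> 0)"

definition convex_l2 :: "(nat \<Rightarrow> real) set" where
  "convex_l2 = {p. convex_seq p \<and> summable (\<lambda>k. (p k)\<^sup>2)}"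

definition is_pmf_nat :: "(nat \<Rightarrow> real) \<Rightarrow> bool" where
  "is_pmf_nat p \<longleftrightarrow> (\<forall>k. p k \<ge> 0) \<and> p sums 1"

definition empirical_pmf :: "(nat \<Rightarrow> 'a \<Rightarrow> nat) \<Rightarrow> nat \<Rightarrow> 'a \<Rightarrow> nat \<Rightarrow> real" where
  "empirical_pmf X n \<omega> j = real (card {i \<in> {1..n}. X i \<omega> = j}) / real n"

definition Phi :: "(nat \<Rightarrow> real) \<Rightarrow> (nat \<Rightarrow> real) \<Rightarrow> real" where
  "Phi q p = (1/2) * (\<Sum>j. (q j - p j)\<^sup>2)"

definition lse :: "(nat \<Rightarrow> 'a \<Rightarrow> nat) \<Rightarrow> nat \<Rightarrow> 'a \<Rightarrow> nat \<Rightarrow> real" where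
  "lse X n \<omega> = (THE p. p \<in> convex_l2 \<and>
      (\<forall>q\<in>convex_l2. Phi (empirical_pmf X n \<omega>) p \<le> Phi (empirical_pmf X n \<omega>) q))"

end

theory Submission
  imports Defs "HOL-Library.Discrete_Functions" "HOL-Real_Asymp.Real_Asymp"
begin

(* The proof has a deterministic and a probabilistic half.

   For every square-summable q the functional Phi q has a
   unique minimiser convex_lse q over the class C of square-summable convex
   sequences (existence by a compactness argument on a minimising sequence,
   uniqueness by the parallelogram identity).  Since the true pmf p0 lies in C,
   the minimising property gives the basic inequality
   ||convex_lse q - p0||_2 <= 2 ||q - p0||_2, and ||.||_r <= ||.||_2 for r >= 2.
   Finally, pmfs converging pointwise to a pmf converge in l2 (Scheffe-type
   argument).  Hence pointwise convergence of the empirical pmf implies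
   ||lse - p0||_r -> 0.

   For each fixed k the indicators of {X_i = k} are bounded
   and pairwise uncorrelated with mean p0 k; a strong law for such variables
   (second moments along the squares n = m^2, then interpolation) gives
   almost sure pointwise convergence of the empirical pmf, simultaneously for
   all k since there are countably many. *)

section \<open>Square-summable sequences\<close>

lemma sq_diff_le: "((a::real) - b)\<^sup>2 \<le> 2 * a\<^sup>2 + 2 * b\<^sup>2"
  using zero_le_power2[of "a + b"] by (simp add: power2_eq_square algebra_simps)

lemma summable_sq_diff:
  fixes q p :: "nat \<Rightarrow> real"
  assumes "summable (\<lambda>k. (q k)\<^sup>2)" "summable (\<lambda>k. (p k)\<^sup>2)"
  shows "summable (\<lambda>k. (q k - p k)\<^sup>2)"
proof (rule summable_comparison_test')
  show "summable (\<lambda>k. 2 * (q k)\<^sup>2 + 2 * (p k)\<^sup>2)"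
    using assms by (intro summable_add summable_mult) auto
  show "norm ((q k - p k)\<^sup>2) \<le> 2 * (q k)\<^sup>2 + 2 * (p k)\<^sup>2" for k
    using sq_diff_le by simp
qed

lemma term_le_suminf:
  fixes f :: "nat \<Rightarrow> real"
  assumes "summable f" "\<And>k. 0 \<le> f k"
  shows "f k \<le> suminf f"
  using sum_le_suminf[OF assms(1), of "{k}"] assms(2) by auto

lemma abs_le_l2_norm:
  fixes d :: "nat \<Rightarrow> real"
  assumes "summable (\<lambda>k. (d k)\<^sup>2)"
  shows "\<bar>d k\<bar> \<le> sqrt (\<Sum>k. (d k)\<^sup>2)"
  using term_le_suminf[OF assms, of k] real_sqrt_le_mono by fastforce

text \<open>Tychonoff in sequential form: a coordinatewise bounded sequence of real
  sequences has a coordinatewise convergent subsequence.\<close>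
lemma bounded_seqs_convergent_subseq:
  fixes f :: "nat \<Rightarrow> nat \<Rightarrow> real" and c :: "nat \<Rightarrow> real"
  assumes "\<And>j k. \<bar>f j k\<bar> \<le> c k"
  shows "\<exists>s l. strict_mono s \<and> (\<forall>k. (\<lambda>j. f (s j) k) \<longlonglongrightarrow> l k)"
proof -
  define K where "K = PiE UNIV (\<lambda>k. {-c k..c k})"
  have "compactin (product_topology (\<lambda>k. euclidean) UNIV) K"
    unfolding K_def by (subst compactin_PiE) auto
  hence "seq_compact K"
    by (intro compact_imp_seq_compact) (simp add: euclidean_product_topology compactin_euclidean_iff)
  moreover have "\<forall>n. f n \<in> K" using assms by (auto simp: K_def abs_le_iff) (metis minus_le_iff)
  ultimately obtain l s where s: "strict_mono s" and lim: "(f \<circ> s) \<longlonglongrightarrow> l"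
    unfolding seq_compact_def by blast
  have "(\<lambda>j. f (s j) k) \<longlonglongrightarrow> l k" for k
  proof -
    have "isCont (\<lambda>x::nat\<Rightarrow>real. x k) l"
      using continuous_on_product_coordinates[of k] continuous_on_eq_continuous_at by blast
    from isCont_tendsto_compose[OF this lim] show ?thesis by (simp add: o_def)
  qed
  with s show ?thesis by blast
qed

text \<open>Lower semicontinuity of the squared l2 distance under pointwise limits (Fatou
  for series): used to pass to the limit in a minimising sequence.\<close>
lemma sq_dist_pointwise_limit:
  fixes q l :: "nat \<Rightarrow> real" and P :: "nat \<Rightarrow> nat \<Rightarrow> real"
  assumes summ: "\<And>j. summable (\<lambda>k. (q k - P j k)\<^sup>2)"
    and lim: "\<And>k. (\<lambda>j. P j k) \<longlonglongrightarrow> l k"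
    and bound: "\<And>j. (\<Sum>k. (q k - P j k)\<^sup>2) \<le> c j" and c: "c \<longlonglongrightarrow> m"
  shows "summable (\<lambda>k. (q k - l k)\<^sup>2) \<and> (\<Sum>k. (q k - l k)\<^sup>2) \<le> m"
proof -
  have partial: "(\<Sum>k<N. (q k - l k)\<^sup>2) \<le> m" for N
  proof (rule tendsto_le[OF _ c])
    show "(\<lambda>j. \<Sum>k<N. (q k - P j k)\<^sup>2) \<longlonglongrightarrow> (\<Sum>k<N. (q k - l k)\<^sup>2)"
      by (intro tendsto_intros lim)
    show "\<forall>\<^sub>F j in sequentially. (\<Sum>k<N. (q k - P j k)\<^sup>2) \<le> c j"
      using order_trans[OF sum_le_suminf[OF summ] bound] by auto
  qed simp
  have "summable (\<lambda>k. (q k - l k)\<^sup>2)"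
    by (rule summableI_nonneg_bounded[OF _ partial]) auto
  with partial show ?thesis by (auto intro: suminf_le_const)
qed

section \<open>The class C of square-summable convex sequences\<close>

lemma convex_l2_zero: "(\<lambda>_. 0) \<in> convex_l2"
  by (auto simp: convex_l2_def convex_seq_def Delta2_def)

text \<open>C is convex; we only need midpoints.\<close>
lemma convex_l2_midpoint:
  assumes "p \<in> convex_l2" "l \<in> convex_l2"
  shows "(\<lambda>k. (p k + l k) / 2) \<in> convex_l2"
proof -
  have mid: "Delta2 (\<lambda>k. (p k + l k) / 2) k = (Delta2 p k + Delta2 l k) / 2" for k
    by (simp add: Delta2_def field_simps)
  have "convex_seq (\<lambda>k. (p k + l k) / 2)"
    using assms by (auto simp: convex_seq_def convex_l2_def mid)
  moreover have "summable (\<lambda>k. ((p k + l k) / 2)\<^sup>2)"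
  proof (rule summable_comparison_test')
    show "summable (\<lambda>k. (p k)\<^sup>2 + (l k)\<^sup>2)"
      using assms by (intro summable_add) (auto simp: convex_l2_def)
    show "norm (((p k + l k) / 2)\<^sup>2) \<le> (p k)\<^sup>2 + (l k)\<^sup>2" for k
    proof -
      have "norm (((p k + l k) / 2)\<^sup>2) = (p k + l k)\<^sup>2 / 4" by (simp add: power_divide)
      moreover have "(p k + l k)\<^sup>2 \<le> 2 * (p k)\<^sup>2 + 2 * (l k)\<^sup>2"
        using sq_diff_le[of "p k" "- l k"] by simp
      ultimately show ?thesis using zero_le_power2[of "p k"] zero_le_power2[of "l k"] by linarith
    qed
  qed
  ultimately show ?thesis by (simp add: convex_l2_def)
qed

lemma convex_seq_pointwise_limit:
  assumes conv: "\<And>j. convex_seq (P j)" and lim: "\<And>k. (\<lambda>j. P j k) \<longlonglongrightarrow> l k"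
  shows "convex_seq l"
  unfolding convex_seq_def
proof (intro allI impI)
  fix k :: nat assume "k \<ge> 1"
  have "(\<lambda>j. Delta2 (P j) k) \<longlonglongrightarrow> Delta2 l k"
    unfolding Delta2_def by (intro tendsto_intros lim)
  moreover have "0 \<le> Delta2 (P j) k" for j
    using conv[of j] \<open>k \<ge> 1\<close> by (simp add: convex_seq_def)
  ultimately show "0 \<le> Delta2 l k" by (intro LIMSEQ_le_const) auto
qed

section \<open>The least squares projection onto C\<close>

lemma minimising_sequence:
  fixes F :: "'b \<Rightarrow> real"
  assumes "A \<noteq> {}" "\<And>x. x \<in> A \<Longrightarrow> 0 \<le> F x"
  obtains P where "\<And>j. P j \<in> A" "\<And>j. F (P j) < Inf (F ` A) + 1 / real (Suc j)"
    "\<And>x. x \<in> A \<Longrightarrow> Inf (F ` A) \<le> F x"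
proof -
  have "\<exists>x\<in>A. F x < Inf (F ` A) + 1 / real (Suc j)" for j
    using cInf_lessD[of "F ` A" "Inf (F ` A) + 1 / real (Suc j)"] assms(1) by auto
  then obtain P where "\<And>j. P j \<in> A" "\<And>j. F (P j) < Inf (F ` A) + 1 / real (Suc j)"
    by metis
  moreover have "Inf (F ` A) \<le> F x" if "x \<in> A" for x
    using assms(2) that by (intro cInf_lower) (auto intro!: bdd_belowI)
  ultimately show ?thesis using that by blast
qed

text \<open>Existence of a minimiser of Phi q over C: a minimising sequence is coordinatewise
  bounded, so a subsequence converges pointwise; the limit is convex and, by lower
  semicontinuity, attains the infimum.\<close>
lemma convex_l2_minimiser_exists:
  fixes q :: "nat \<Rightarrow> real"
  assumes qs: "summable (\<lambda>k. (q k)\<^sup>2)"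
  shows "\<exists>l\<in>convex_l2. \<forall>p\<in>convex_l2. Phi q l \<le> Phi q p"
proof -
  define F where "F p = (\<Sum>k. (q k - p k)\<^sup>2)" for p :: "nat \<Rightarrow> real"
  have Fsum: "summable (\<lambda>k. (q k - p k)\<^sup>2)" if "p \<in> convex_l2" for p
    using that qs by (intro summable_sq_diff) (auto simp: convex_l2_def)
  have F0: "0 \<le> F p" if "p \<in> convex_l2" for p
    unfolding F_def using Fsum[OF that] by (intro suminf_nonneg) auto
  define m where "m = Inf (F ` convex_l2)"
  obtain P where P: "\<And>j. P j \<in> convex_l2" "\<And>j. F (P j) < m + 1 / real (Suc j)"
    and mle: "\<And>p. p \<in> convex_l2 \<Longrightarrow> m \<le> F p"
    using minimising_sequence[of convex_l2 F, folded m_def] F0 convex_l2_zero by blast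
  have bnd: "\<bar>P j k\<bar> \<le> \<bar>q k\<bar> + sqrt (F (\<lambda>_. 0) + 1)" for j k
  proof -
    have "1 / real (Suc j) \<le> 1" by simp
    hence "F (P j) \<le> F (\<lambda>_. 0) + 1" using P(2)[of j] mle[OF convex_l2_zero] by linarith
    hence "sqrt (F (P j)) \<le> sqrt (F (\<lambda>_. 0) + 1)" by simp
    moreover have "\<bar>q k - P j k\<bar> \<le> sqrt (F (P j))"
      using abs_le_l2_norm[OF Fsum[OF P(1)], of k] by (simp add: F_def)
    ultimately show ?thesis by linarith
  qed
  obtain s l where s: "strict_mono s" and lim: "\<And>k. (\<lambda>j. P (s j) k) \<longlonglongrightarrow> l k"
    using bounded_seqs_convergent_subseq[of P, OF bnd] by blast
  have "summable (\<lambda>k. (q k - l k)\<^sup>2) \<and> F l \<le> m"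
    unfolding F_def
  proof (rule sq_dist_pointwise_limit[OF Fsum[OF P(1)] lim])
    show "(\<Sum>k. (q k - P (s j) k)\<^sup>2) \<le> m + 1 / real (Suc j)" for j
    proof -
      have "1 / real (Suc (s j)) \<le> 1 / real (Suc j)"
        using seq_suble[OF s, of j] by (simp add: frac_le)
      thus ?thesis using P(2)[of "s j"] by (simp add: F_def)
    qed
    show "(\<lambda>j. m + 1 / real (Suc j)) \<longlonglongrightarrow> m"
      using tendsto_add[OF tendsto_const LIMSEQ_Suc[OF lim_const_over_n], of m 1] by simp
  qed
  then have sl: "summable (\<lambda>k. (q k - l k)\<^sup>2)" and Fl: "F l \<le> m" by auto
  have "summable (\<lambda>k. (l k)\<^sup>2)"
    using summable_sq_diff[OF qs sl] by simp
  moreover have "convex_seq l"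
    using convex_seq_pointwise_limit[OF _ lim] P(1) by (auto simp: convex_l2_def)
  ultimately have "l \<in> convex_l2" by (simp add: convex_l2_def)
  moreover have "Phi q l \<le> Phi q p" if "p \<in> convex_l2" for p
    using Fl mle[OF that] by (simp add: Phi_def F_def)
  ultimately show ?thesis by blast
qed

lemma sq_dist_midpoint:
  fixes q p l :: "nat \<Rightarrow> real"
  assumes sp: "summable (\<lambda>k. (q k - p k)\<^sup>2)" and sl: "summable (\<lambda>k. (q k - l k)\<^sup>2)"
    and spl: "summable (\<lambda>k. (p k - l k)\<^sup>2)"
  shows "(\<Sum>k. (q k - (p k + l k) / 2)\<^sup>2)
      = (\<Sum>k. (q k - p k)\<^sup>2) / 2 + (\<Sum>k. (q k - l k)\<^sup>2) / 2 - (\<Sum>k. (p k - l k)\<^sup>2) / 4"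
proof -
  have "(\<lambda>k. (q k - (p k + l k) / 2)\<^sup>2)
      = (\<lambda>k. (q k - p k)\<^sup>2 / 2 + (q k - l k)\<^sup>2 / 2 - (p k - l k)\<^sup>2 / 4)"
    by (rule ext) (simp add: power2_eq_square field_simps)
  moreover have "(\<lambda>k. (q k - p k)\<^sup>2 / 2 + (q k - l k)\<^sup>2 / 2 - (p k - l k)\<^sup>2 / 4) sums
      ((\<Sum>k. (q k - p k)\<^sup>2) / 2 + (\<Sum>k. (q k - l k)\<^sup>2) / 2 - (\<Sum>k. (p k - l k)\<^sup>2) / 4)"
    by (intro sums_add sums_diff sums_divide summable_sums sp sl spl)
  ultimately show ?thesis by (simp add: sums_iff)
qed

text \<open>Uniqueness of the minimiser: the midpoint of two minimisers lies in C, and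
  the parallelogram identity forces their distance to vanish.\<close>
lemma convex_l2_minimiser_unique:
  fixes q p l :: "nat \<Rightarrow> real"
  assumes qs: "summable (\<lambda>k. (q k)\<^sup>2)" and C: "p \<in> convex_l2" "l \<in> convex_l2"
    and pmin: "\<forall>r\<in>convex_l2. Phi q p \<le> Phi q r" and lmin: "\<forall>r\<in>convex_l2. Phi q l \<le> Phi q r"
  shows "p = l"
proof -
  have sq: "summable (\<lambda>k. (p k)\<^sup>2)" "summable (\<lambda>k. (l k)\<^sup>2)" using C by (auto simp: convex_l2_def)
  have spl: "summable (\<lambda>k. (p k - l k)\<^sup>2)" by (rule summable_sq_diff[OF sq])
  have "Phi q p \<le> Phi q (\<lambda>k. (p k + l k) / 2)" "Phi q l \<le> Phi q (\<lambda>k. (p k + l k) / 2)"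
    "Phi q p \<le> Phi q l" "Phi q l \<le> Phi q p"
    using pmin lmin C convex_l2_midpoint[OF C] by auto
  moreover have "Phi q (\<lambda>k. (p k + l k) / 2) = Phi q p / 2 + Phi q l / 2 - (\<Sum>k. (p k - l k)\<^sup>2) / 8"
    unfolding Phi_def
    by (subst sq_dist_midpoint[OF summable_sq_diff[OF qs sq(1)] summable_sq_diff[OF qs sq(2)] spl])
       simp
  ultimately have "(\<Sum>k. (p k - l k)\<^sup>2) \<le> 0" by linarith
  with spl have "\<forall>k. (p k - l k)\<^sup>2 = 0"
    using suminf_eq_zero_iff[OF spl] suminf_nonneg[OF spl] by (simp add: antisym)
  thus "p = l" by auto
qed

definition convex_lse :: "(nat \<Rightarrow> real) \<Rightarrow> nat \<Rightarrow> real" where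
  "convex_lse q = (THE p. p \<in> convex_l2 \<and> (\<forall>r\<in>convex_l2. Phi q p \<le> Phi q r))"

lemma lse_eq_convex_lse: "lse X n \<omega> = convex_lse (empirical_pmf X n \<omega>)"
  by (simp add: lse_def convex_lse_def)

lemma convex_lse:
  assumes "summable (\<lambda>k. (q k)\<^sup>2)"
  shows "convex_lse q \<in> convex_l2 \<and> (\<forall>r\<in>convex_l2. Phi q (convex_lse q) \<le> Phi q r)"
proof -
  have "\<exists>!p. p \<in> convex_l2 \<and> (\<forall>r\<in>convex_l2. Phi q p \<le> Phi q r)"
    using convex_l2_minimiser_exists[OF assms] convex_l2_minimiser_unique[OF assms] by blast
  thus ?thesis unfolding convex_lse_def by (rule theI')
qed

section \<open>Error bounds for the estimator\<close>

text \<open>Basic inequality: if ph does at least as well as p0 \<in> C in the least squares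
  criterion, then ||ph - p0||_2 <= 2 ||q - p0||_2 (triangle inequality).\<close>
lemma lse_sq_error_bound:
  fixes q p0 ph :: "nat \<Rightarrow> real"
  assumes qs: "summable (\<lambda>k. (q k)\<^sup>2)" and p0: "p0 \<in> convex_l2" and ph: "ph \<in> convex_l2"
    and le: "Phi q ph \<le> Phi q p0"
  shows "summable (\<lambda>k. (ph k - p0 k)\<^sup>2) \<and> (\<Sum>k. (ph k - p0 k)\<^sup>2) \<le> 4 * (\<Sum>k. (q k - p0 k)\<^sup>2)"
proof -
  have sq: "summable (\<lambda>k. (p0 k)\<^sup>2)" "summable (\<lambda>k. (ph k)\<^sup>2)"
    using p0 ph by (auto simp: convex_l2_def)
  have sh: "summable (\<lambda>k. (q k - ph k)\<^sup>2)" and s0: "summable (\<lambda>k. (q k - p0 k)\<^sup>2)"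
    and sd: "summable (\<lambda>k. (ph k - p0 k)\<^sup>2)"
    using summable_sq_diff qs sq by auto
  have "(\<Sum>k. (ph k - p0 k)\<^sup>2) \<le> (\<Sum>k. 2 * (q k - ph k)\<^sup>2 + 2 * (q k - p0 k)\<^sup>2)"
    using sq_diff_le[of "ph k - q k" "p0 k - q k" for k]
    by (intro suminf_le sd summable_add summable_mult sh s0) (simp add: power2_commute)
  also have "\<dots> = 2 * (\<Sum>k. (q k - ph k)\<^sup>2) + 2 * (\<Sum>k. (q k - p0 k)\<^sup>2)"
    by (intro sums_unique[symmetric] sums_add sums_mult summable_sums sh s0)
  also have "\<dots> \<le> 4 * (\<Sum>k. (q k - p0 k)\<^sup>2)" using le by (simp add: Phi_def)
  finally show ?thesis using sd by simp
qed

text \<open>For m >= 2 the l_m norm is dominated by the l2 norm: every term is at most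
  s = ||d||_2 in absolute value, so |d k|^m <= s^(m-2) (d k)^2.\<close>
lemma sum_abs_power_le_l2:
  fixes d :: "nat \<Rightarrow> real"
  assumes sd: "summable (\<lambda>k. (d k)\<^sup>2)" and m2: "m \<ge> 2"
  shows "summable (\<lambda>k. \<bar>d k\<bar> ^ m) \<and> (\<Sum>k. \<bar>d k\<bar> ^ m) \<le> sqrt (\<Sum>k. (d k)\<^sup>2) ^ m"
proof -
  define s where "s = sqrt (\<Sum>k. (d k)\<^sup>2)"
  have D0: "0 \<le> (\<Sum>k. (d k)\<^sup>2)" using sd by (intro suminf_nonneg) auto
  have pw: "\<bar>d k\<bar> ^ m \<le> s ^ (m - 2) * (d k)\<^sup>2" for k
  proof -
    have "\<bar>d k\<bar> \<le> s" using abs_le_l2_norm[OF sd] by (simp add: s_def)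
    hence "\<bar>d k\<bar> ^ (m - 2) * (d k)\<^sup>2 \<le> s ^ (m - 2) * (d k)\<^sup>2"
      by (intro mult_right_mono power_mono) auto
    moreover have "\<bar>d k\<bar> ^ m = \<bar>d k\<bar> ^ (m - 2) * (d k)\<^sup>2"
      using m2 by (metis le_add_diff_inverse2 power2_abs power_add)
    ultimately show ?thesis by simp
  qed
  have summ: "summable (\<lambda>k. \<bar>d k\<bar> ^ m)"
    using pw by (intro summable_comparison_test'[OF summable_mult[OF sd, of "s ^ (m - 2)"]]) auto
  have "(\<Sum>k. \<bar>d k\<bar> ^ m) \<le> (\<Sum>k. s ^ (m - 2) * (d k)\<^sup>2)"
    using pw by (intro suminf_le summable_mult sd summ)
  also have "\<dots> = s ^ (m - 2) * s ^ 2"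
    using D0 by (simp add: suminf_mult[OF sd] s_def)
  also have "\<dots> = s ^ m" using m2 by (metis le_add_diff_inverse2 power_add)
  finally show ?thesis using summ by (simp add: s_def)
qed

lemma seq_norm_le_l2:
  fixes d :: "nat \<Rightarrow> real" and r :: enat
  assumes sd: "summable (\<lambda>k. (d k)\<^sup>2)" and r: "r \<ge> 2"
  shows "0 \<le> seq_norm r d \<and> seq_norm r d \<le> sqrt (\<Sum>k. (d k)\<^sup>2)"
proof (cases r)
  case infinity
  note dk = abs_le_l2_norm[OF sd]
  hence bdd: "bdd_above (range (\<lambda>k. \<bar>d k\<bar>))" by (auto intro!: bdd_aboveI)
  have "\<bar>d 0\<bar> \<le> (SUP k. \<bar>d k\<bar>)" by (rule cSUP_upper[OF _ bdd]) auto
  moreover have "(SUP k. \<bar>d k\<bar>) \<le> sqrt (\<Sum>k. (d k)\<^sup>2)" by (rule cSUP_least) (auto simp: dk)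
  ultimately show ?thesis using infinity by (simp add: seq_norm_def)
next
  case (enat m)
  with r have m2: "m \<ge> 2" by (simp add: numeral_eq_enat)
  define s where "s = sqrt (\<Sum>k. (d k)\<^sup>2)"
  have s0: "0 \<le> s" using sd by (simp add: s_def suminf_nonneg)
  note lm = sum_abs_power_le_l2[OF sd m2]
  have S0: "0 \<le> (\<Sum>k. \<bar>d k\<bar> ^ m)" using lm by (intro suminf_nonneg) auto
  have "(\<Sum>k. \<bar>d k\<bar> ^ m) powr (1 / real m) \<le> (s ^ m) powr (1 / real m)"
    using lm S0 by (intro powr_mono2) (auto simp: s_def)
  also have "(s ^ m) powr (1 / real m) = s"
    using s0 m2 by (cases "s = 0") (auto simp: powr_realpow[symmetric] powr_powr)
  finally show ?thesis using enat S0 by (simp add: seq_norm_def s_def)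
qed

section \<open>Pointwise versus l2 convergence of pmfs\<close>

lemma pmf_nat_le_1:
  assumes "is_pmf_nat p"
  shows "p k \<le> 1"
proof -
  have "summable p" "suminf p = 1" "\<And>k. 0 \<le> p k" using assms by (auto simp: is_pmf_nat_def sums_iff)
  thus ?thesis using term_le_suminf[of p k] by simp
qed

lemma pmf_nat_summable_sq:
  assumes "is_pmf_nat p"
  shows "summable (\<lambda>k. (p k)\<^sup>2)"
proof (rule summable_comparison_test')
  show "summable p" using assms by (simp add: is_pmf_nat_def sums_iff)
  show "norm ((p k)\<^sup>2) \<le> p k" for k
    using mult_left_le[OF pmf_nat_le_1[OF assms, of k]] assms
    by (simp add: is_pmf_nat_def power2_eq_square)
qed

lemma pmf_nat_sq_diff_le:
  assumes "is_pmf_nat e" "is_pmf_nat p"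
  shows "(e k - p k)\<^sup>2 \<le> e k + p k"
proof -
  have "0 \<le> e k" "0 \<le> p k" using assms by (auto simp: is_pmf_nat_def)
  moreover have "\<bar>e k - p k\<bar> \<le> 1"
    using pmf_nat_le_1[OF assms(1), of k] pmf_nat_le_1[OF assms(2), of k] calculation by linarith
  ultimately have "\<bar>e k - p k\<bar> * \<bar>e k - p k\<bar> \<le> 1 * \<bar>e k - p k\<bar>" by (intro mult_right_mono) auto
  with \<open>0 \<le> e k\<close> \<open>0 \<le> p k\<close> show ?thesis by (simp add: power2_eq_square)
qed

lemma pmf_nat_summable_sq_diff:
  assumes "is_pmf_nat e" "is_pmf_nat p"
  shows "summable (\<lambda>k. (e k - p k)\<^sup>2)"
proof (rule summable_comparison_test')
  show "summable (\<lambda>k. e k + p k)"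
    using assms by (intro summable_add) (auto simp: is_pmf_nat_def sums_iff)
  show "norm ((e k - p k)\<^sup>2) \<le> e k + p k" for k using pmf_nat_sq_diff_le[OF assms] by simp
qed

lemma pmf_nat_sq_dist_head_tail:
  assumes e: "is_pmf_nat e" and p: "is_pmf_nat p"
  shows "(\<Sum>k. (e k - p k)\<^sup>2) \<le> (\<Sum>k<N. (e k - p k)\<^sup>2) + (1 - (\<Sum>k<N. e k)) + (1 - (\<Sum>k<N. p k))"
proof -
  have es: "summable e" "suminf e = 1" and ps: "summable p" "suminf p = 1"
    using e p by (auto simp: is_pmf_nat_def sums_iff)
  note ss = pmf_nat_summable_sq_diff[OF e p]
  have "(\<Sum>k. (e (k + N) - p (k + N))\<^sup>2) \<le> (\<Sum>k. e (k + N) + p (k + N))"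
    using ss es ps pmf_nat_sq_diff_le[OF e p]
    by (intro suminf_le summable_add) (auto intro: summable_ignore_initial_segment)
  also have "\<dots> = (\<Sum>k. e (k + N)) + (\<Sum>k. p (k + N))"
    using es ps by (intro suminf_add[symmetric]) (auto intro: summable_ignore_initial_segment)
  also have "\<dots> = (1 - (\<Sum>k<N. e k)) + (1 - (\<Sum>k<N. p k))"
    using suminf_split_initial_segment[OF es(1), of N] suminf_split_initial_segment[OF ps(1), of N]
      es(2) ps(2) by simp
  finally show ?thesis using suminf_split_initial_segment[OF ss, of N] by simp
qed

text \<open>Choose N
  with small tail mass of p; then the head and, by pointwise convergence, the tail
  mass of e n are eventually small too.\<close>
lemma pmf_nat_pointwise_imp_l2:
  fixes e :: "nat \<Rightarrow> nat \<Rightarrow> real" and p :: "nat \<Rightarrow> real"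
  assumes e: "\<And>n. n \<ge> 1 \<Longrightarrow> is_pmf_nat (e n)" and p: "is_pmf_nat p"
    and lim: "\<And>k. (\<lambda>n. e n k) \<longlonglongrightarrow> p k"
  shows "(\<lambda>n. \<Sum>k. (e n k - p k)\<^sup>2) \<longlonglongrightarrow> 0"
proof (rule order_tendstoI)
  fix a :: real assume "a < 0"
  have "0 \<le> (\<Sum>k. (e n k - p k)\<^sup>2)" if "n \<ge> 1" for n
    using pmf_nat_summable_sq_diff[OF e[OF that] p] by (intro suminf_nonneg) auto
  with \<open>a < 0\<close> show "\<forall>\<^sub>F n in sequentially. a < (\<Sum>k. (e n k - p k)\<^sup>2)"
    by (intro eventually_sequentiallyI[of 1]) force
next
  fix eps :: real assume "0 < eps"
  have "(\<lambda>N. \<Sum>k<N. p k) \<longlonglongrightarrow> 1" using p by (simp add: is_pmf_nat_def sums_def)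
  hence "\<forall>\<^sub>F N in sequentially. 1 - eps / 4 < (\<Sum>k<N. p k)"
    using \<open>0 < eps\<close> by (intro order_tendstoD(1)) auto
  then obtain N where "1 - eps / 4 < (\<Sum>k<N. p k)"
    unfolding eventually_sequentially by blast
  hence N: "1 - (\<Sum>k<N. p k) < eps / 4" by linarith
  have "(\<lambda>n. \<Sum>k<N. (e n k - p k)\<^sup>2) \<longlonglongrightarrow> (\<Sum>k<N. (p k - p k)\<^sup>2)"
    by (intro tendsto_intros lim)
  hence head: "\<forall>\<^sub>F n in sequentially. (\<Sum>k<N. (e n k - p k)\<^sup>2) < eps / 4"
    using \<open>0 < eps\<close> by (intro order_tendstoD(2)) auto
  have "(\<lambda>n. 1 - (\<Sum>k<N. e n k)) \<longlonglongrightarrow> 1 - (\<Sum>k<N. p k)"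
    by (intro tendsto_intros lim)
  hence tail: "\<forall>\<^sub>F n in sequentially. 1 - (\<Sum>k<N. e n k) < eps / 2"
    using N \<open>0 < eps\<close> by (intro order_tendstoD(2)) auto
  show "\<forall>\<^sub>F n in sequentially. (\<Sum>k. (e n k - p k)\<^sup>2) < eps"
    using head tail eventually_ge_at_top[of 1]
  proof eventually_elim
    case (elim n)
    with pmf_nat_sq_dist_head_tail[OF e[OF elim(3)] p, of N] N show ?case by linarith
  qed
qed

lemma convex_lse_consistent:
  fixes e :: "nat \<Rightarrow> nat \<Rightarrow> real" and p0 :: "nat \<Rightarrow> real" and r :: enat
  assumes e: "\<And>n. n \<ge> 1 \<Longrightarrow> is_pmf_nat (e n)" and esq: "\<And>n. summable (\<lambda>k. (e n k)\<^sup>2)"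
    and p0: "is_pmf_nat p0" "convex_seq p0" and lim: "\<And>k. (\<lambda>n. e n k) \<longlonglongrightarrow> p0 k"
    and r: "r \<ge> 2"
  shows "(\<lambda>n. seq_norm r (\<lambda>k. convex_lse (e n) k - p0 k)) \<longlonglongrightarrow> 0"
proof (rule tendsto_sandwich[OF _ _ tendsto_const])
  have p0C: "p0 \<in> convex_l2"
    using p0 pmf_nat_summable_sq by (simp add: convex_l2_def)
  have "0 \<le> seq_norm r (\<lambda>k. convex_lse (e n) k - p0 k) \<and>
      seq_norm r (\<lambda>k. convex_lse (e n) k - p0 k) \<le> sqrt (4 * (\<Sum>k. (e n k - p0 k)\<^sup>2))" for n
  proof -
    note lse = convex_lse[OF esq[of n]]
    have err: "summable (\<lambda>k. (convex_lse (e n) k - p0 k)\<^sup>2)"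
        "(\<Sum>k. (convex_lse (e n) k - p0 k)\<^sup>2) \<le> 4 * (\<Sum>k. (e n k - p0 k)\<^sup>2)"
      using lse_sq_error_bound[OF esq p0C, of "convex_lse (e n)"] lse p0C by auto
    have "sqrt (\<Sum>k. (convex_lse (e n) k - p0 k)\<^sup>2) \<le> sqrt (4 * (\<Sum>k. (e n k - p0 k)\<^sup>2))"
      using err(2) by simp
    thus ?thesis using seq_norm_le_l2[OF err(1) r] by linarith
  qed
  thus "\<forall>\<^sub>F n in sequentially. 0 \<le> seq_norm r (\<lambda>k. convex_lse (e n) k - p0 k)"
    "\<forall>\<^sub>F n in sequentially. seq_norm r (\<lambda>k. convex_lse (e n) k - p0 k)
       \<le> sqrt (4 * (\<Sum>k. (e n k - p0 k)\<^sup>2))"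
    by auto
  show "(\<lambda>n. sqrt (4 * (\<Sum>k. (e n k - p0 k)\<^sup>2))) \<longlonglongrightarrow> 0"
    using tendsto_real_sqrt[OF tendsto_mult_right_zero[OF pmf_nat_pointwise_imp_l2[OF e p0(1) lim]]]
    by simp
qed

section \<open>A strong law for bounded pairwise uncorrelated variables\<close>

lemma average_between_squares:
  fixes S :: "nat \<Rightarrow> real"
  assumes mono: "mono S" and S0: "\<And>n. 0 \<le> S n" and n: "n \<ge> 1"
  shows "S ((floor_sqrt n)\<^sup>2) / (real (floor_sqrt n) + 1)\<^sup>2 \<le> S n / real n \<and>
    S n / real n \<le> S ((floor_sqrt n + 1)\<^sup>2) / (real (floor_sqrt n))\<^sup>2"
proof -
  define t where "t = floor_sqrt n"
  have t1: "real t \<ge> 1" using n by (simp add: t_def Suc_le_eq)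
  have lo: "t\<^sup>2 \<le> n" and hi: "n \<le> (t+1)\<^sup>2"
    using floor_sqrt_power2_le[of n] Suc_floor_sqrt_power2_gt[of n] by (auto simp: t_def)
  have lo': "(real t)\<^sup>2 \<le> real n" and hi': "real n \<le> (real t + 1)\<^sup>2"
    using lo hi by (metis of_nat_le_iff of_nat_power,
        metis of_nat_le_iff of_nat_power of_nat_Suc Suc_eq_plus1 add.commute)
  have "S (t\<^sup>2) / (real t + 1)\<^sup>2 \<le> S n / (real t + 1)\<^sup>2"
    using monoD[OF mono lo] by (simp add: divide_right_mono)
  also have "\<dots> \<le> S n / real n" using S0[of n] n hi' by (intro divide_left_mono) auto
  finally have lower: "S (t\<^sup>2) / (real t + 1)\<^sup>2 \<le> S n / real n" .
  have "S n / real n \<le> S n / (real t)\<^sup>2"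
    using S0[of n] lo' t1 n by (intro divide_left_mono mult_pos_pos) auto
  also have "\<dots> \<le> S ((t+1)\<^sup>2) / (real t)\<^sup>2"
    using monoD[OF mono hi] by (simp add: divide_right_mono)
  finally show ?thesis using lower by (simp add: t_def)
qed

text \<open>Averages of nonnegative terms converge once they converge along the squares
  n = (m+1)^2, since the ratio of consecutive squares tends to 1.\<close>
lemma averages_from_square_subsequence:
  fixes y :: "nat \<Rightarrow> real"
  assumes y0: "\<And>i. i \<ge> 1 \<Longrightarrow> 0 \<le> y i"
    and A: "(\<lambda>m. (\<Sum>i\<in>{1..(m+1)\<^sup>2}. y i) / real ((m+1)\<^sup>2)) \<longlonglongrightarrow> p"
  shows "(\<lambda>n. (\<Sum>i\<in>{1..n}. y i) / real n) \<longlonglongrightarrow> p"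
proof -
  define S where "S n = (\<Sum>i\<in>{1..n}. y i)" for n
  have S0: "0 \<le> S n" for n unfolding S_def by (intro sum_nonneg y0) auto
  have mono: "mono S" unfolding S_def by (intro monoI sum_mono2 y0) auto
  have A': "(\<lambda>m. S ((m+1)\<^sup>2) / (real (m+1))\<^sup>2) \<longlonglongrightarrow> p" using A by (simp add: S_def)
  define L where "L t = S (t\<^sup>2) / (real t + 1)\<^sup>2" for t
  define U where "U t = S ((t+1)\<^sup>2) / (real t)\<^sup>2" for t
  have "(\<lambda>m. (real (m+1) / real (m+2))\<^sup>2) \<longlonglongrightarrow> 1" by real_asymp
  from tendsto_mult[OF A' this] have "(\<lambda>m. L (Suc m)) \<longlonglongrightarrow> p"
    by (simp add: L_def power_divide add_ac)
  hence Llim: "L \<longlonglongrightarrow> p" by (rule LIMSEQ_imp_Suc)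
  have "(\<lambda>m. (real (m+2) / real (m+1))\<^sup>2) \<longlonglongrightarrow> 1" by real_asymp
  from tendsto_mult[OF LIMSEQ_Suc[OF A'] this] have "(\<lambda>m. U (Suc m)) \<longlonglongrightarrow> p"
    by (simp add: U_def power_divide add_ac)
  hence Ulim: "U \<longlonglongrightarrow> p" by (rule LIMSEQ_imp_Suc)
  have sqrt_lim: "filterlim floor_sqrt at_top sequentially"
    unfolding filterlim_at_top
    by (intro allI eventually_sequentiallyI[of "_\<^sup>2"]) (simp add: le_floor_sqrt_iff)
  have "(\<lambda>n. S n / real n) \<longlonglongrightarrow> p"
  proof (rule tendsto_sandwich[OF _ _ filterlim_compose[OF Llim sqrt_lim]
        filterlim_compose[OF Ulim sqrt_lim]])
    show "\<forall>\<^sub>F n in sequentially. L (floor_sqrt n) \<le> S n / real n"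
      "\<forall>\<^sub>F n in sequentially. S n / real n \<le> U (floor_sqrt n)"
      using average_between_squares[OF mono S0] unfolding L_def U_def
      by (auto intro: eventually_sequentiallyI[of 1])
  qed
  thus ?thesis by (simp add: S_def)
qed

context prob_space
begin

lemma unit_interval_rv:
  fixes Y :: "'a \<Rightarrow> real"
  assumes "Y \<in> borel_measurable M" "\<And>\<omega>. 0 \<le> Y \<omega> \<and> Y \<omega> \<le> 1"
  shows "integrable M Y \<and> 0 \<le> expectation Y \<and> expectation Y \<le> 1"
proof -
  have "integrable M Y" using assms by (intro integrable_const_bound[of _ 1]) auto
  thus ?thesis using assms by (auto intro!: integral_nonneg_AE integral_le_const)
qed

lemma uncorrelated_centered_product:
  fixes U V :: "'a \<Rightarrow> real"
  assumes "integrable M U" "integrable M V" "integrable M (\<lambda>\<omega>. U \<omega> * V \<omega>)"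
    and "expectation U = p" "expectation V = p" "expectation (\<lambda>\<omega>. U \<omega> * V \<omega>) = p\<^sup>2"
  shows "expectation (\<lambda>\<omega>. (U \<omega> - p) * (V \<omega> - p)) = 0"
proof -
  have "(\<lambda>\<omega>. (U \<omega> - p) * (V \<omega> - p)) = (\<lambda>\<omega>. (U \<omega> * V \<omega> - p * V \<omega>) - (p * U \<omega> - p\<^sup>2))"
    by (auto simp: algebra_simps power2_eq_square)
  hence "expectation (\<lambda>\<omega>. (U \<omega> - p) * (V \<omega> - p))
      = expectation (\<lambda>\<omega>. U \<omega> * V \<omega>) - p * expectation V - (p * expectation U - p\<^sup>2)"
    using assms(1-3) by (simp add: prob_space)
  thus ?thesis using assms(4-6) by (simp add: power2_eq_square)
qed

lemma expectation_sq_sum: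
  fixes f :: "nat \<Rightarrow> 'a \<Rightarrow> real"
  assumes "finite I" "\<And>i j. i \<in> I \<Longrightarrow> j \<in> I \<Longrightarrow> integrable M (\<lambda>\<omega>. f i \<omega> * f j \<omega>)"
  shows "expectation (\<lambda>\<omega>. (\<Sum>i\<in>I. f i \<omega>)\<^sup>2) = (\<Sum>i\<in>I. \<Sum>j\<in>I. expectation (\<lambda>\<omega>. f i \<omega> * f j \<omega>))"
proof -
  have "expectation (\<lambda>\<omega>. (\<Sum>i\<in>I. f i \<omega>)\<^sup>2) = expectation (\<lambda>\<omega>. \<Sum>i\<in>I. \<Sum>j\<in>I. f i \<omega> * f j \<omega>)"
    by (simp add: power2_eq_square sum_product)
  also have "\<dots> = (\<Sum>i\<in>I. expectation (\<lambda>\<omega>. \<Sum>j\<in>I. f i \<omega> * f j \<omega>))"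
    using assms by (intro Bochner_Integration.integral_sum integrable_sum) auto
  also have "\<dots> = (\<Sum>i\<in>I. \<Sum>j\<in>I. expectation (\<lambda>\<omega>. f i \<omega> * f j \<omega>))"
    using assms by (intro sum.cong refl Bochner_Integration.integral_sum) auto
  finally show ?thesis .
qed

text \<open>Second moment of a centred sum of [0,1]-valued pairwise uncorrelated variables:
  the off-diagonal covariances vanish and each variance is at most 1.\<close>
lemma centered_sum_second_moment:
  fixes Y :: "nat \<Rightarrow> 'a \<Rightarrow> real"
  assumes Ym: "\<And>i. i \<ge> 1 \<Longrightarrow> Y i \<in> borel_measurable M"
    and Yb: "\<And>i \<omega>. i \<ge> 1 \<Longrightarrow> 0 \<le> Y i \<omega> \<and> Y i \<omega> \<le> 1"
    and EY: "\<And>i. i \<ge> 1 \<Longrightarrow> expectation (Y i) = p"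
    and EYY: "\<And>i j. i \<ge> 1 \<Longrightarrow> j \<ge> 1 \<Longrightarrow> i \<noteq> j \<Longrightarrow> expectation (\<lambda>\<omega>. Y i \<omega> * Y j \<omega>) = p\<^sup>2"
  shows "expectation (\<lambda>\<omega>. (\<Sum>i\<in>{1..N}. (Y i \<omega> - p))\<^sup>2) \<le> real N"
proof -
  have intY: "integrable M (Y i)" and p01: "0 \<le> p" "p \<le> 1" if "i \<ge> 1" for i
    using unit_interval_rv[OF Ym Yb, of i] EY[of i] that by auto
  define C where "C i j \<omega> = (Y i \<omega> - p) * (Y j \<omega> - p)" for i j \<omega>
  have Cb: "\<bar>C i j \<omega>\<bar> \<le> 1" if "i \<ge> 1" "j \<ge> 1" for i j \<omega>
  proof -
    have "\<bar>Y i \<omega> - p\<bar> \<le> 1" "\<bar>Y j \<omega> - p\<bar> \<le> 1"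
      using Yb[OF that(1), of \<omega>] Yb[OF that(2), of \<omega>] p01[OF that(1)] by auto
    hence "\<bar>Y i \<omega> - p\<bar> * \<bar>Y j \<omega> - p\<bar> \<le> 1 * 1" by (intro mult_mono) auto
    thus ?thesis by (simp add: C_def abs_mult)
  qed
  have intC: "integrable M (C i j)" if "i \<ge> 1" "j \<ge> 1" for i j
    using Cb[OF that] Ym[OF that(1)] Ym[OF that(2)]
    by (intro integrable_const_bound[of _ 1]) (auto simp: C_def[abs_def])
  have offdiag: "expectation (C i j) = 0" if "i \<ge> 1" "j \<ge> 1" "i \<noteq> j" for i j
    unfolding C_def
  proof (rule uncorrelated_centered_product[OF intY[OF that(1)] intY[OF that(2)] _
        EY[OF that(1)] EY[OF that(2)] EYY[OF that]])
    show "integrable M (\<lambda>\<omega>. Y i \<omega> * Y j \<omega>)"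
      using Yb[OF that(1)] Yb[OF that(2)] Ym[OF that(1)] Ym[OF that(2)]
      by (intro integrable_const_bound[of _ 1]) (auto simp: abs_mult intro!: mult_le_one)
  qed
  have "expectation (\<lambda>\<omega>. (\<Sum>i\<in>{1..N}. (Y i \<omega> - p))\<^sup>2)
      = (\<Sum>i\<in>{1..N}. \<Sum>j\<in>{1..N}. expectation (C i j))"
    unfolding C_def using intC by (intro expectation_sq_sum) (auto simp: C_def[abs_def])
  also have "\<dots> = (\<Sum>i\<in>{1..N}. expectation (C i i))"
  proof (rule sum.cong[OF refl])
    fix i assume i: "i \<in> {1..N}"
    have "(\<Sum>j\<in>{1..N}. expectation (C i j)) = (\<Sum>j\<in>{1..N}. if i = j then expectation (C i i) else 0)"
      using i offdiag by (intro sum.cong) auto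
    thus "(\<Sum>j\<in>{1..N}. expectation (C i j)) = expectation (C i i)" using i by simp
  qed
  also have "\<dots> \<le> (\<Sum>i\<in>{1..N}. 1)"
  proof (rule sum_mono)
    fix i assume "i \<in> {1..N}"
    hence i: "i \<ge> 1" by simp
    have "\<And>\<omega>. C i i \<omega> \<le> 1" using Cb[OF i i] abs_le_D1 by blast
    thus "expectation (C i i) \<le> 1" using intC[OF i i] by (intro integral_le_const AE_I2) auto
  qed
  finally show ?thesis by simp
qed

lemma average_sq_deviation:
  fixes Y :: "nat \<Rightarrow> 'a \<Rightarrow> real"
  assumes Ym: "\<And>i. i \<ge> 1 \<Longrightarrow> Y i \<in> borel_measurable M"
    and Yb: "\<And>i \<omega>. i \<ge> 1 \<Longrightarrow> 0 \<le> Y i \<omega> \<and> Y i \<omega> \<le> 1"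
    and EY: "\<And>i. i \<ge> 1 \<Longrightarrow> expectation (Y i) = p"
    and EYY: "\<And>i j. i \<ge> 1 \<Longrightarrow> j \<ge> 1 \<Longrightarrow> i \<noteq> j \<Longrightarrow> expectation (\<lambda>\<omega>. Y i \<omega> * Y j \<omega>) = p\<^sup>2"
    and N: "N \<ge> 1"
  defines "Z \<equiv> \<lambda>\<omega>. ((\<Sum>i\<in>{1..N}. Y i \<omega>) / real N - p)\<^sup>2"
  shows "Z \<in> borel_measurable M" "\<And>\<omega>. 0 \<le> Z \<omega> \<and> Z \<omega> \<le> 1" "integrable M Z"
    and "expectation Z \<le> 1 / real N"
proof -
  have p01: "0 \<le> p" "p \<le> 1" using unit_interval_rv[OF Ym Yb, of 1] EY[of 1] by auto
  have ZW: "Z \<omega> = (\<Sum>i\<in>{1..N}. (Y i \<omega> - p))\<^sup>2 / (real N)\<^sup>2" for \<omega>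
  proof -
    have "(\<Sum>i\<in>{1..N}. Y i \<omega>) / real N - p = (\<Sum>i\<in>{1..N}. (Y i \<omega> - p)) / real N"
      using N by (simp add: sum_subtractf field_simps)
    thus ?thesis by (simp add: Z_def power_divide)
  qed
  show Zm: "Z \<in> borel_measurable M" unfolding ZW[abs_def] using Ym by measurable
  show Z01: "0 \<le> Z \<omega> \<and> Z \<omega> \<le> 1" for \<omega>
  proof -
    have "\<bar>\<Sum>i\<in>{1..N}. (Y i \<omega> - p)\<bar> \<le> (\<Sum>i\<in>{1..N}. \<bar>Y i \<omega> - p\<bar>)" by (rule sum_abs)
    also have "\<dots> \<le> (\<Sum>i\<in>{1..N}. 1)"
    proof (rule sum_mono)
      fix i assume "i \<in> {1..N}"
      hence "0 \<le> Y i \<omega> \<and> Y i \<omega> \<le> 1" using Yb by auto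
      thus "\<bar>Y i \<omega> - p\<bar> \<le> 1" using p01 by auto
    qed
    finally have "\<bar>\<Sum>i\<in>{1..N}. (Y i \<omega> - p)\<bar> \<le> real N" by simp
    hence "(\<Sum>i\<in>{1..N}. (Y i \<omega> - p))\<^sup>2 \<le> (real N)\<^sup>2"
      by (metis abs_ge_zero power2_abs power_mono)
    thus ?thesis unfolding ZW using N by (simp add: divide_le_eq_1)
  qed
  show "integrable M Z" using Zm Z01 by (intro integrable_const_bound[of _ 1]) auto
  have "expectation Z = expectation (\<lambda>\<omega>. (\<Sum>i\<in>{1..N}. (Y i \<omega> - p))\<^sup>2) / (real N)\<^sup>2"
    unfolding ZW by simp
  also have "\<dots> \<le> real N / (real N)\<^sup>2"
  proof (rule divide_right_mono)
    show "expectation (\<lambda>\<omega>. (\<Sum>i\<in>{1..N}. (Y i \<omega> - p))\<^sup>2) \<le> real N"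
      using Ym Yb EY EYY by (rule centered_sum_second_moment)
  qed simp
  also have "\<dots> = 1 / real N" by (simp add: power2_eq_square)
  finally show "expectation Z \<le> 1 / real N" .
qed

text \<open>Nonnegative random variables with summable expectations have an almost surely
  summable series (monotone convergence).\<close>
lemma AE_summable_nonneg:
  fixes Z :: "nat \<Rightarrow> 'a \<Rightarrow> real"
  assumes Zm: "\<And>m. Z m \<in> borel_measurable M" and Z0: "\<And>m \<omega>. 0 \<le> Z m \<omega>"
    and intZ: "\<And>m. integrable M (Z m)" and sumE: "summable (\<lambda>m. expectation (Z m))"
  shows "AE \<omega> in M. summable (\<lambda>m. Z m \<omega>)"
proof -
  have "(\<integral>\<^sup>+\<omega>. (\<Sum>m. ennreal (Z m \<omega>)) \<partial>M) = (\<Sum>m. \<integral>\<^sup>+\<omega>. ennreal (Z m \<omega>) \<partial>M)"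
    by (rule nn_integral_suminf) (use Zm in measurable)
  also have "\<dots> = (\<Sum>m. ennreal (expectation (Z m)))"
    using intZ Z0 by (subst nn_integral_eq_integral) auto
  also have "\<dots> = ennreal (\<Sum>m. expectation (Z m))"
    using Z0 by (intro suminf_ennreal2 sumE integral_nonneg_AE) auto
  finally have "(\<integral>\<^sup>+\<omega>. (\<Sum>m. ennreal (Z m \<omega>)) \<partial>M) \<noteq> \<infinity>" by simp
  hence "AE \<omega> in M. (\<Sum>m. ennreal (Z m \<omega>)) \<noteq> \<infinity>"
    by (intro nn_integral_PInf_AE) (use Zm in measurable)
  thus ?thesis using Z0 by (auto intro: summable_suminf_not_top)
qed

text \<open>Strong law of large numbers for [0,1]-valued pairwise uncorrelated variables
  with common mean p: along n = (m+1)^2 the squared deviations of the averages have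
  expectations at most 1/(m+1)^2, hence are almost surely summable and tend to 0;
  interpolation between squares yields convergence of all averages.\<close>
lemma strong_law_bounded_uncorrelated:
  fixes Y :: "nat \<Rightarrow> 'a \<Rightarrow> real"
  assumes Ym: "\<And>i. i \<ge> 1 \<Longrightarrow> Y i \<in> borel_measurable M"
    and Yb: "\<And>i \<omega>. i \<ge> 1 \<Longrightarrow> 0 \<le> Y i \<omega> \<and> Y i \<omega> \<le> 1"
    and EY: "\<And>i. i \<ge> 1 \<Longrightarrow> expectation (Y i) = p"
    and EYY: "\<And>i j. i \<ge> 1 \<Longrightarrow> j \<ge> 1 \<Longrightarrow> i \<noteq> j \<Longrightarrow> expectation (\<lambda>\<omega>. Y i \<omega> * Y j \<omega>) = p\<^sup>2"
  shows "AE \<omega> in M. (\<lambda>n. (\<Sum>i\<in>{1..n}. Y i \<omega>) / real n) \<longlonglongrightarrow> p"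
proof -
  define Z where "Z m \<omega> = ((\<Sum>i\<in>{1..(m+1)\<^sup>2}. Y i \<omega>) / real ((m+1)\<^sup>2) - p)\<^sup>2" for m \<omega>
  have dev: "Z m \<in> borel_measurable M" "\<And>\<omega>. 0 \<le> Z m \<omega> \<and> Z m \<omega> \<le> 1" "integrable M (Z m)"
    "expectation (Z m) \<le> 1 / real ((m+1)\<^sup>2)" for m
    using average_sq_deviation[OF Ym Yb EY EYY, where N="(m+1)\<^sup>2"] unfolding Z_def[abs_def] by auto
  have "summable (\<lambda>m. expectation (Z m))"
  proof (rule summable_comparison_test')
    have "summable (\<lambda>n. inverse (real n ^ 2))" by (rule inverse_power_summable) simp
    hence "summable (\<lambda>m. inverse (real (Suc m) ^ 2))" by (subst summable_Suc_iff)
    thus "summable (\<lambda>m. 1 / real ((m+1)\<^sup>2))" by (simp add: divide_inverse)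
    show "norm (expectation (Z m)) \<le> 1 / real ((m+1)\<^sup>2)" for m
      using dev[of m] integral_nonneg_AE[of "Z m"] by auto
  qed
  hence "AE \<omega> in M. summable (\<lambda>m. Z m \<omega>)" using dev by (intro AE_summable_nonneg) auto
  thus ?thesis
  proof (rule AE_mp, intro AE_I2 impI)
    fix \<omega> assume "summable (\<lambda>m. Z m \<omega>)"
    hence "(\<lambda>m. sqrt (Z m \<omega>)) \<longlonglongrightarrow> sqrt 0"
      by (intro tendsto_real_sqrt summable_LIMSEQ_zero)
    hence "(\<lambda>m. \<bar>(\<Sum>i\<in>{1..(m+1)\<^sup>2}. Y i \<omega>) / real ((m+1)\<^sup>2) - p\<bar>) \<longlonglongrightarrow> 0"
      by (simp add: Z_def)
    hence "(\<lambda>m. (\<Sum>i\<in>{1..(m+1)\<^sup>2}. Y i \<omega>) / real ((m+1)\<^sup>2)) \<longlonglongrightarrow> p"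
      by (simp only: tendsto_rabs_zero_iff LIM_zero_iff)
    thus "(\<lambda>n. (\<Sum>i\<in>{1..n}. Y i \<omega>) / real n) \<longlonglongrightarrow> p"
      by (rule averages_from_square_subsequence[rotated]) (use Yb in auto)
  qed
qed

end

section \<open>The empirical pmf\<close>

lemma card_filter_eq_sum:
  "finite A \<Longrightarrow> real (card {i\<in>A. P i}) = (\<Sum>i\<in>A. if P i then 1 else 0)"
  by (simp add: sum.If_cases Int_def)

lemma sum_card_fibres:
  fixes f :: "nat \<Rightarrow> nat"
  shows "(\<Sum>k\<in>f ` {1..n}. real (card {i\<in>{1..n}. f i = k})) = real n"
proof -
  have "(\<Sum>k\<in>f ` {1..n}. real (card {i\<in>{1..n}. f i = k}))
      = (\<Sum>k\<in>f ` {1..n}. \<Sum>i\<in>{1..n}. if f i = k then 1 else 0)"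
    by (intro sum.cong refl card_filter_eq_sum) auto
  also have "\<dots> = (\<Sum>i\<in>{1..n}. \<Sum>k\<in>f ` {1..n}. if f i = k then 1 else 0)"
    by (rule sum.swap)
  also have "\<dots> = (\<Sum>i\<in>{1..n}. 1)"
    by (intro sum.cong refl) (auto simp: sum.delta)
  finally show ?thesis by simp
qed

lemma empirical_pmf_outside:
  assumes "k \<notin> (\<lambda>i. X i \<omega>) ` {1..n}"
  shows "empirical_pmf X n \<omega> k = 0"
proof -
  have "{i\<in>{1..n}. X i \<omega> = k} = {}" using assms by auto
  thus ?thesis by (simp add: empirical_pmf_def)
qed

lemma empirical_pmf_summable_sq: "summable (\<lambda>k. (empirical_pmf X n \<omega> k)\<^sup>2)"
  by (rule summable_finite[of "(\<lambda>i. X i \<omega>) ` {1..n}"]) (auto simp: empirical_pmf_outside)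

lemma empirical_pmf_is_pmf:
  assumes "n \<ge> 1"
  shows "is_pmf_nat (empirical_pmf X n \<omega>)"
proof -
  have "empirical_pmf X n \<omega> sums (\<Sum>k\<in>(\<lambda>i. X i \<omega>) ` {1..n}. empirical_pmf X n \<omega> k)"
    by (rule sums_finite) (auto intro: empirical_pmf_outside)
  also have "(\<Sum>k\<in>(\<lambda>i. X i \<omega>) ` {1..n}. empirical_pmf X n \<omega> k) = 1"
    using sum_card_fibres[of n "\<lambda>i. X i \<omega>"] assms
    by (simp add: empirical_pmf_def flip: sum_divide_distrib)
  finally have "empirical_pmf X n \<omega> sums 1" .
  moreover have "0 \<le> empirical_pmf X n \<omega> k" for k by (simp add: empirical_pmf_def)
  ultimately show ?thesis unfolding is_pmf_nat_def by blast
qed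

lemma empirical_pmf_indicator_average:
  assumes "\<omega> \<in> space M"
  shows "empirical_pmf X n \<omega> k = (\<Sum>i\<in>{1..n}. indicator (X i -` {k} \<inter> space M) \<omega>) / real n"
proof -
  have "(\<Sum>i\<in>{1..n}. indicator (X i -` {k} \<inter> space M) \<omega>) = (\<Sum>i\<in>{1..n}. if X i \<omega> = k then 1 else (0::real))"
    using assms by (intro sum.cong) (auto simp: indicator_def)
  also have "\<dots> = real (card {i\<in>{1..n}. X i \<omega> = k})"
    by (simp only: card_filter_eq_sum[OF finite_atLeastAtMost])
  finally show ?thesis by (simp only: empirical_pmf_def)
qed

text \<open>Almost sure pointwise convergence of the empirical pmf: for each k the
  indicators of {X_i = k} are [0,1]-valued with mean p0 k and, by independence,
  pairwise uncorrelated; countably many k are handled at once.\<close>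
lemma (in prob_space) empirical_pmf_AE_pointwise:
  fixes X :: "nat \<Rightarrow> 'a \<Rightarrow> nat" and p0 :: "nat \<Rightarrow> real"
  assumes meas: "\<And>i. i \<ge> 1 \<Longrightarrow> X i \<in> measurable M (count_space UNIV)"
    and indep: "indep_vars (\<lambda>_. count_space UNIV) X {1..}"
    and distr: "\<And>i k. i \<ge> 1 \<Longrightarrow> measure M {\<omega> \<in> space M. X i \<omega> = k} = p0 k"
  shows "AE \<omega> in M. \<forall>k. (\<lambda>n. empirical_pmf X n \<omega> k) \<longlonglongrightarrow> p0 k"
proof -
  define A where "A i k = X i -` {k} \<inter> space M" for i k
  have A: "A i k \<in> events" if "i \<ge> 1" for i k
    using measurable_sets[OF meas[OF that], of "{k}"] by (simp add: A_def)
  have probA: "prob (A i k) = p0 k" if "i \<ge> 1" for i k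
    using distr[OF that, of k] by (simp add: A_def Int_def conj_commute)
  have "AE \<omega> in M. (\<lambda>n. (\<Sum>i\<in>{1..n}. indicator (A i k) \<omega>) / real n) \<longlonglongrightarrow> p0 k" for k
  proof (rule strong_law_bounded_uncorrelated)
    show "indicator (A i k) \<in> borel_measurable M" if "i \<ge> 1" for i
      using A[OF that] by simp
    show "0 \<le> (indicator (A i k) \<omega> :: real) \<and> (indicator (A i k) \<omega> :: real) \<le> 1" for i \<omega>
      by (simp add: indicator_def)
    show "expectation (indicator (A i k)) = p0 k" if "i \<ge> 1" for i
      using A[OF that] probA[OF that] by simp
    show "expectation (\<lambda>\<omega>. indicator (A i k) \<omega> * indicator (A j k) \<omega>) = (p0 k)\<^sup>2"
      if "i \<ge> 1" "j \<ge> 1" "i \<noteq> j" for i j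
    proof -
      have "prob (A i k \<inter> A j k) = prob (\<Inter>l\<in>{i,j}. X l -` {k} \<inter> space M)"
        by (auto simp: A_def intro: arg_cong[where f=prob])
      also have "\<dots> = (\<Prod>l\<in>{i,j}. prob (X l -` {k} \<inter> space M))"
        using that by (intro indep_varsD[OF indep]) auto
      finally have "prob (A i k \<inter> A j k) = (p0 k)\<^sup>2"
        using that probA by (simp add: A_def power2_eq_square)
      moreover have "A i k \<inter> A j k \<in> events" using A that by auto
      ultimately show ?thesis by (simp add: indicator_inter_arith[symmetric])
    qed
  qed
  hence "AE \<omega> in M. \<forall>k. (\<lambda>n. (\<Sum>i\<in>{1..n}. indicator (A i k) \<omega>) / real n) \<longlonglongrightarrow> p0 k"
    by (simp add: AE_all_countable)
  thus ?thesis by (auto elim!: AE_mp intro!: AE_I2 simp: A_def empirical_pmf_indicator_average)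
qed

theorem proposition2:
  fixes M :: "'a measure" and X :: "nat \<Rightarrow> 'a \<Rightarrow> nat" and p0 :: "nat \<Rightarrow> real" and r :: enat
  assumes "prob_space M"
    and pmf0: "is_pmf_nat p0"
    and conv0: "convex_seq p0"
    and supp0: "{k. p0 k > 0} = UNIV \<or> (\<exists>S::nat. S \<ge> 1 \<and> {k. p0 k > 0} = {0..S})"
    and meas: "\<And>i. i \<ge> 1 \<Longrightarrow> X i \<in> measurable M (count_space UNIV)"
    and indep: "prob_space.indep_vars M (\<lambda>_. count_space UNIV) X {1..}"
    and distr: "\<And>i k. i \<ge> 1 \<Longrightarrow> measure M {\<omega> \<in> space M. X i \<omega> = k} = p0 k"
    and r: "r \<ge> 2"
  shows "AE \<omega> in M. (\<lambda>n. seq_norm r (\<lambda>k. lse X n \<omega> k - p0 k)) \<longlonglongrightarrow> 0"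
proof -
  interpret prob_space M by fact
  have "AE \<omega> in M. \<forall>k. (\<lambda>n. empirical_pmf X n \<omega> k) \<longlonglongrightarrow> p0 k"
    using meas indep distr by (rule empirical_pmf_AE_pointwise)
  thus ?thesis
  proof (rule AE_mp, intro AE_I2 impI)
    fix \<omega> assume "\<forall>k. (\<lambda>n. empirical_pmf X n \<omega> k) \<longlonglongrightarrow> p0 k"
    with empirical_pmf_is_pmf empirical_pmf_summable_sq pmf0 conv0 r
    have "(\<lambda>n. seq_norm r (\<lambda>k. convex_lse (empirical_pmf X n \<omega>) k - p0 k)) \<longlonglongrightarrow> 0"
      by (intro convex_lse_consistent) auto
    thus "(\<lambda>n. seq_norm r (\<lambda>k. lse X n \<omega> k - p0 k)) \<longlonglongrightarrow> 0"
      by (simp add: lse_eq_convex_lse)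
  qed
qed

end
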